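(* Fix $\beta>0$. Both the sigmoid loss $L(x)=-\frac{1}{1+e^{-\beta x}}$ and the logistic loss $L(x)=-\ln\!\left(\frac{1}{1+e^{-\beta x}}\right)=\ln(1+e^{-\beta x})$ are consistent with AUC (in the sense defined in the context).
   Context: Let $\mathcal{Y}$ be a set of items and let $\mathcal{D}$ be a distribution on $\mathcal{Y}\times\{-1,+1\}$, with marginal $\mathcal{D}_{\mathcal{Y}}$ on $\mathcal{Y}$ and $\eta(y)=P[r=+1\mid y]$. For a measurable scoring function $s:\mathcal{Y}\to\mathbb{R}$, the AUC risk is $R(s)=\mathbb{E}_{(y,r),(y',r')\sim\mathcal{D}}\big[\ell(s,(y,r),(y',r'))\mid r\neq r'\big]$, where $\ell(s,(y,r),(y',r'))=\mathcal{I}\big((r-r')(s(y)-s(y'))<0\big)+\tfrac12\mathcal{I}(s(y)=s(y'))$ and $\mathcal{I}$ is the indicator function; $R(s^* )=\inf_s R(s)$ over measurable $s$ (the Bayes risk). For a surrogate loss $L:\mathbb{R}\to\mathbb{R}$, the surrogate risk is $R_L(s)=\mathbb{E}_{(y,y')\sim\mathcal{D}_{\mathcal{Y}}^2}\big[\eta(y)(1-\eta(y'))L(s(y)-s(y'))+\eta(y')(1-\eta(y))L(s(y')-s(y))\big]$, and $R_L(s^*_L)=\inf_s R_L(s)$. The loss $L$ is called consistent with AUC if for every distribution $\mathcal{D}$ on $\mathcal{Y}\times\{-1,+1\}$ and every sequence of scoring functions $(s^{\langle i\rangle})_{i\ge1}$, $R_L(s^{\langle i\rangle})\to R_L(s^*_L)$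 implies $R(s^{\langle i\rangle})\to R(s^* )$. *)

theory Defs
  imports "HOL-Probability.Probability"
begin

text \<open>Items live in a measurable space M (carrier space M, a type 'a).
  Labels in {-1,+1} are encoded as bool: True means +1, False means -1.\<close>

definition lab :: "bool \<Rightarrow> real" where
  "lab b = (if b then 1 else -1)"

definition auc_loss :: "('a \<Rightarrow> real) \<Rightarrow> 'a \<times> bool \<Rightarrow> 'a \<times> bool \<Rightarrow> real" where
  "auc_loss s z z' =
     (if (lab (snd z) - lab (snd z')) * (s (fst z) - s (fst z')) < 0 then 1 else 0)
     + (if s (fst z) = s (fst z') then 1/2 else 0)"

text \<open>AUC risk: conditional expectation of the loss over two independent draws
  from D, given that the labels differ (E[l * 1_A] / P(A)).\<close>
definition auc_risk :: "('a \<times> bool) measure \<Rightarrow> ('a \<Rightarrow> real) \<Rightarrow> real" where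
  "auc_risk D s =
     (\<integral>p. auc_loss s (fst p) (snd p) * indicator {p. snd (fst p) \<noteq> snd (snd p)} p \<partial>(D \<Otimes>\<^sub>M D))
     / measure (D \<Otimes>\<^sub>M D) {p \<in> space (D \<Otimes>\<^sub>M D). snd (fst p) \<noteq> snd (snd p)}"

definition auc_bayes :: "'a measure \<Rightarrow> ('a \<times> bool) measure \<Rightarrow> real" where
  "auc_bayes M D = (INF s \<in> borel_measurable M. auc_risk D s)"

text \<open>eta is a version of the conditional probability P[r = +1 | y]
  with respect to the marginal of D on M.\<close>
definition is_cond_pos ::
  "'a measure \<Rightarrow> ('a \<times> bool) measure \<Rightarrow> ('a \<Rightarrow> real) \<Rightarrow> bool" where
  "is_cond_pos M D \<eta> \<longleftrightarrow>
     \<eta> \<in> borel_measurable M \<and> (\<forall>y\<in>space M. 0 \<le> \<eta> y \<and> \<eta> y \<le> 1) \<and>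
     (\<forall>A\<in>sets M. measure D (A \<times> {True}) =
                    (\<integral>y. indicator A y * \<eta> y \<partial>(distr D M fst)))"

text \<open>Extended-real valued integral (positive part minus negative part), so that
  surrogate risks may take the value +infinity.\<close>
definition ext_integral :: "'b measure \<Rightarrow> ('b \<Rightarrow> real) \<Rightarrow> ereal" where
  "ext_integral N f =
     enn2ereal (\<integral>\<^sup>+x. ennreal (f x) \<partial>N) - enn2ereal (\<integral>\<^sup>+x. ennreal (- f x) \<partial>N)"

definition surr_risk ::
  "(real \<Rightarrow> real) \<Rightarrow> 'a measure \<Rightarrow> ('a \<times> bool) measure \<Rightarrow> ('a \<Rightarrow> real)
     \<Rightarrow> ('a \<Rightarrow> real) \<Rightarrow> ereal" where
  "surr_risk L M D \<eta> s =
     ext_integral (distr D M fst \<Otimes>\<^sub>M distr D M fst)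
       (\<lambda>(y, y'). \<eta> y * (1 - \<eta> y') * L (s y - s y') + \<eta> y' * (1 - \<eta> y) * L (s y' - s y))"

definition surr_bayes ::
  "(real \<Rightarrow> real) \<Rightarrow> 'a measure \<Rightarrow> ('a \<times> bool) measure \<Rightarrow> ('a \<Rightarrow> real) \<Rightarrow> ereal" where
  "surr_bayes L M D \<eta> = (INF s \<in> borel_measurable M. surr_risk L M D \<eta> s)"

definition auc_consistent :: "(real \<Rightarrow> real) \<Rightarrow> 'a measure \<Rightarrow> bool" where
  "auc_consistent L M \<longleftrightarrow>
     (\<forall>D \<eta>. prob_space D \<and> sets D = sets (M \<Otimes>\<^sub>M count_space UNIV) \<and> is_cond_pos M D \<eta> \<longrightarrow>
       (\<forall>s :: nat \<Rightarrow> 'a \<Rightarrow> real. (\<forall>i. s i \<in> borel_measurable M) \<longrightarrow>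
          (\<lambda>i. surr_risk L M D \<eta> (s i)) \<longlonglongrightarrow> surr_bayes L M D \<eta> \<longrightarrow>
          (\<lambda>i. auc_risk D (s i)) \<longlonglongrightarrow> auc_bayes M D))"

end

theory Submission
  imports Defs
begin

text \<open>For a pair of items \<open>y\<close>, \<open>y'\<close> let \<open>a = \<eta> y (1 - \<eta> y')\<close> and \<open>b = \<eta> y' (1 - \<eta> y)\<close> be the
  probabilities of the two label patterns that make the pair count for AUC, and \<open>d = s y - s y'\<close>.
  Both risks are integrals over pairs of items: of \<open>a\<cdot>[d < 0] + b\<cdot>[d > 0] + (a + b)/2\<cdot>[d = 0]\<close>
  (normalised by the probability of distinct labels) and of \<open>a L(d) + b L(-d)\<close>. For both losses the
  pointwise surrogate regret dominates a multiple of the square of the pointwise AUC regret, and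
  the pointwise minimum of the surrogate is nearly attained for all pairs at once by scoring with a
  fixed transform of \<open>\<eta>\<close> (a multiple of \<open>\<eta>\<close> for the sigmoid loss, a clipped logit of \<open>\<eta>\<close> for the
  logistic loss). So the surrogate Bayes risk is the integral of the pointwise minima, a minimising
  sequence has vanishing integrated surrogate regret, and since \<open>w\<^sup>2 \<le> K e\<close> implies
  \<open>w \<le> \<delta> + K e / (4 \<delta>)\<close> its integrated AUC regret vanishes as well.\<close>

section \<open>Pointwise AUC regret\<close>

definition pair_loss :: "(real \<Rightarrow> real) \<Rightarrow> real \<Rightarrow> real \<Rightarrow> real \<Rightarrow> real" where
  "pair_loss L a b d = a * L d + b * L (- d)"

text \<open>The pointwise AUC loss \<open>a\<cdot>[d < 0] + b\<cdot>[d > 0] + (a + b)/2\<cdot>[d = 0]\<close> minus its minimum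
  \<open>min a b\<close>.\<close>
definition auc_regret :: "real \<Rightarrow> real \<Rightarrow> real \<Rightarrow> real" where
  "auc_regret a b d =
     (if d < 0 then max (a - b) 0 else if d > 0 then max (b - a) 0 else \<bar>a - b\<bar> / 2)"

lemma auc_regret_nonneg: "0 \<le> auc_regret a b d"
  by (auto simp: auc_regret_def)

lemma auc_regret_le_abs_diff: "auc_regret a b d \<le> \<bar>a - b\<bar>"
  by (auto simp: auc_regret_def)

lemma auc_regret_swap: "auc_regret a b d = auc_regret b a (- d)"
  by (auto simp: auc_regret_def abs_minus_commute)

lemma pair_loss_swap: "pair_loss L a b d = pair_loss L b a (- d)"
  by (simp add: pair_loss_def)

lemma auc_regret_calibration_symmetric:
  assumes calib: "\<And>a b d. 0 \<le> b \<Longrightarrow> b \<le> a \<Longrightarrow> a + b \<le> 1 \<Longrightarrow>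
      (auc_regret a b d)\<^sup>2 \<le> K * (pair_loss L a b d - \<Phi> a b)"
    and sym: "\<And>a b. \<Phi> a b = \<Phi> b a"
    and "0 \<le> a" "0 \<le> b" "a + b \<le> 1"
  shows "(auc_regret a b d)\<^sup>2 \<le> K * (pair_loss L a b d - \<Phi> a b)"
proof (cases "b \<le> a")
  case True
  then show ?thesis using assms by (intro calib) auto
next
  case False
  then have "(auc_regret b a (- d))\<^sup>2 \<le> K * (pair_loss L b a (- d) - \<Phi> b a)"
    using assms by (intro calib) auto
  then show ?thesis
    by (simp add: auc_regret_swap[of a] pair_loss_swap[of L a] sym[of a])
qed

lemma le_of_power2_le_mult:
  fixes w x K \<delta> :: real
  assumes "w\<^sup>2 \<le> K * x" "\<delta> > 0"
  shows "w \<le> \<delta> + K / (4 * \<delta>) * x"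
proof -
  have "4 * \<delta> * w \<le> w\<^sup>2 + 4 * \<delta>\<^sup>2"
    using zero_le_power2[of "w - 2 * \<delta>"] by (simp add: power2_eq_square algebra_simps)
  also have "\<dots> \<le> K * x + 4 * \<delta>\<^sup>2" using assms by simp
  finally show ?thesis using assms(2) by (simp add: field_simps power2_eq_square)
qed

section \<open>The sigmoid loss\<close>

definition sigmoid :: "real \<Rightarrow> real" where
  "sigmoid z = 1 / (1 + exp (- z))"

lemma sigmoid_pos: "0 < sigmoid z"
  by (simp add: sigmoid_def add_pos_pos)

lemma sigmoid_le_one: "sigmoid z \<le> 1"
  by (simp add: sigmoid_def add_pos_pos)

lemma sigmoid_minus: "sigmoid (- z) = 1 - sigmoid z"
proof -
  have "0 < 1 + exp z" "0 < 1 + exp (- z)" by (auto intro: add_pos_pos)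
  then show ?thesis by (simp add: sigmoid_def exp_minus field_simps)
qed

lemma sigmoid_zero: "sigmoid 0 = 1 / 2"
  by (simp add: sigmoid_def)

lemma sigmoid_less_half: "z < 0 \<Longrightarrow> sigmoid z < 1 / 2"
  using one_less_exp_iff[of "- z"] by (simp add: sigmoid_def divide_simps add_pos_pos)

definition sigmoid_loss :: "real \<Rightarrow> real \<Rightarrow> real" where
  "sigmoid_loss \<beta> x = - sigmoid (\<beta> * x)"

lemma pair_loss_sigmoid_loss:
  "pair_loss (sigmoid_loss \<beta>) a b d = (a - b) * (1 - sigmoid (\<beta> * d)) - a"
  by (simp add: pair_loss_def sigmoid_loss_def sigmoid_minus algebra_simps)

lemma sigmoid_pair_loss_ge: "- max a b \<le> pair_loss (sigmoid_loss \<beta>) a b d"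
proof -
  let ?\<sigma> = "sigmoid (\<beta> * d)"
  have "(a - b) * (1 - ?\<sigma>) - a = (b - a) * ?\<sigma> - b" by (simp add: algebra_simps)
  moreover have "b \<le> a \<Longrightarrow> 0 \<le> (a - b) * (1 - ?\<sigma>)" "a \<le> b \<Longrightarrow> 0 \<le> (b - a) * ?\<sigma>"
    using sigmoid_pos[of "\<beta> * d"] sigmoid_le_one[of "\<beta> * d"] by simp_all
  ultimately show ?thesis
    unfolding pair_loss_sigmoid_loss by (cases "b \<le> a") (simp_all add: max_def)
qed

lemma sigmoid_regret_calibration:
  assumes "\<beta> > 0" "0 \<le> a" "0 \<le> b" "a + b \<le> 1"
  shows "(auc_regret a b d)\<^sup>2 \<le> 2 * (pair_loss (sigmoid_loss \<beta>) a b d - - max a b)"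
proof (rule auc_regret_calibration_symmetric[OF _ max.commute[THEN arg_cong[of _ _ uminus]]])
  fix a b d :: real
  assume ab: "0 \<le> b" "b \<le> a" "a + b \<le> 1"
  have "auc_regret a b d = (a - b) * (if d < 0 then 1 else if d = 0 then 1 / 2 else 0)"
    using ab by (simp add: auc_regret_def)
  also have "\<dots> \<le> (a - b) * (2 * (1 - sigmoid (\<beta> * d)))"
  proof (intro mult_left_mono)
    have "d < 0 \<Longrightarrow> sigmoid (\<beta> * d) < 1 / 2"
      using assms(1) by (intro sigmoid_less_half) (simp add: mult_pos_neg)
    then show "(if d < 0 then 1 else if d = 0 then 1 / 2 else 0) \<le> 2 * (1 - sigmoid (\<beta> * d))"
      using sigmoid_le_one[of "\<beta> * d"] by (auto simp: sigmoid_zero)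
  qed (use ab in simp)
  finally have "auc_regret a b d \<le> 2 * (pair_loss (sigmoid_loss \<beta>) a b d + max a b)"
    using ab by (simp add: pair_loss_sigmoid_loss algebra_simps)
  moreover have "(auc_regret a b d)\<^sup>2 \<le> auc_regret a b d"
    using auc_regret_le_abs_diff[of a b d] auc_regret_nonneg[of a b d] ab
    by (simp add: power2_eq_square mult_left_le)
  ultimately show "(auc_regret a b d)\<^sup>2 \<le> 2 * (pair_loss (sigmoid_loss \<beta>) a b d - - max a b)"
    by simp
qed (use assms in auto)

lemma mult_one_minus_sigmoid_le:
  assumes "c \<ge> 0" "\<kappa> > 0"
  shows "c * (1 - sigmoid (\<kappa> * c)) \<le> 1 / \<kappa>"
proof -
  have pos: "0 < 1 + exp (\<kappa> * c)" by (simp add: add_pos_pos)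
  have "c * (1 - sigmoid (\<kappa> * c)) = c / (1 + exp (\<kappa> * c))"
    unfolding sigmoid_minus[symmetric] by (simp add: sigmoid_def)
  also have "\<dots> \<le> 1 / \<kappa>"
  proof -
    have "\<kappa> * c \<le> 1 + exp (\<kappa> * c)"
      using exp_ge_add_one_self[of "\<kappa> * c"] by linarith
    then show ?thesis using assms pos by (simp add: divide_simps mult.commute)
  qed
  finally show ?thesis .
qed

text \<open>For the weights of two items with positive-class probabilities \<open>y\<close>, \<open>y'\<close> one has
  \<open>a - b = y - y'\<close>, so this is the score \<open>k \<cdot> y\<close>.\<close>
lemma sigmoid_pair_loss_linear_score:
  assumes "\<beta> > 0" "k > 0"
  shows "pair_loss (sigmoid_loss \<beta>) a b (k * (a - b)) + max a b \<le> 1 / (\<beta> * k)"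
proof -
  have "pair_loss (sigmoid_loss \<beta>) a b (k * (a - b)) + max a b \<le> 1 / (\<beta> * k)" if "b \<le> a" for a b
    using that mult_one_minus_sigmoid_le[of "a - b" "\<beta> * k"] assms
    by (simp add: pair_loss_sigmoid_loss mult.assoc)
  from this[of a b] this[of b a] show ?thesis
    by (cases "b \<le> a") (auto simp: pair_loss_swap[of _ a] max.commute algebra_simps)
qed

section \<open>The logistic loss\<close>

definition logistic_loss :: "real \<Rightarrow> real \<Rightarrow> real" where
  "logistic_loss \<beta> x = - ln (sigmoid (\<beta> * x))"

definition logistic_pair_risk :: "real \<Rightarrow> real \<Rightarrow> real \<Rightarrow> real" where
  "logistic_pair_risk a b t = a * ln (1 + 1 / t) + b * ln (1 + t)"

text \<open>The minimum of \<^term>\<open>logistic_pair_risk a b\<close>, attained at \<open>t = a / b\<close>.\<close>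
definition pair_entropy :: "real \<Rightarrow> real \<Rightarrow> real" where
  "pair_entropy a b = a * ln ((a + b) / a) + b * ln ((a + b) / b)"

lemma pair_loss_logistic_loss:
  "pair_loss (logistic_loss \<beta>) a b d = logistic_pair_risk a b (exp (\<beta> * d))"
proof -
  have "logistic_loss \<beta> x = ln (1 + exp (- (\<beta> * x)))" for x
    by (simp add: logistic_loss_def sigmoid_def ln_div add_pos_pos)
  then show ?thesis
    by (simp add: pair_loss_def logistic_pair_risk_def exp_minus inverse_eq_divide)
qed

lemma pair_entropy_commute: "pair_entropy a b = pair_entropy b a"
  by (simp add: pair_entropy_def add.commute)

lemma entropy_term_bounds:
  fixes x y :: real
  assumes "0 \<le> x" "0 \<le> y"
  shows "0 \<le> x * ln ((x + y) / x)" "x * ln ((x + y) / x) \<le> y"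
proof -
  have "0 \<le> x * ln ((x + y) / x) \<and> x * ln ((x + y) / x) \<le> y"
  proof (cases "x = 0")
    case False
    then have x: "0 < x" using assms by simp
    have "x * ln ((x + y) / x) \<le> x * ((x + y) / x - 1)"
      using x assms by (intro mult_left_mono ln_le_minus_one) auto
    also have "\<dots> = y" using x by (simp add: field_simps)
    finally show ?thesis using x assms by simp
  qed (use assms in simp)
  then show "0 \<le> x * ln ((x + y) / x)" "x * ln ((x + y) / x) \<le> y" by simp_all
qed

lemma pair_entropy_bounds:
  "0 \<le> a \<Longrightarrow> 0 \<le> b \<Longrightarrow> 0 \<le> pair_entropy a b \<and> pair_entropy a b \<le> a + b"
  using entropy_term_bounds[of a b] entropy_term_bounds[of b a]
  by (simp add: pair_entropy_def add.commute)

lemma gibbs_term: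
  fixes a b w w' :: real
  assumes "0 \<le> a" "0 \<le> b" "0 < w" "0 < w'"
  shows "a - (a + b) * w / (w + w') \<le> a * ln ((w + w') / w) - a * ln ((a + b) / a)"
proof (cases "a = 0")
  case True
  then show ?thesis using assms by simp
next
  case False
  then have a: "a > 0" using assms by simp
  have ln_diff: "1 - v / u \<le> ln u - ln v" if "0 < u" "0 < v" for u v :: real
    using ln_le_minus_one[of "v / u"] that by (simp add: ln_div)
  have "1 - ((a + b) / a) / ((w + w') / w) \<le> ln ((w + w') / w) - ln ((a + b) / a)"
    using a assms by (intro ln_diff) auto
  then have "a * (1 - ((a + b) / a) / ((w + w') / w)) \<le> a * (ln ((w + w') / w) - ln ((a + b) / a))"
    using a by (intro mult_left_mono) auto
  moreover have "a * (1 - ((a + b) / a) / ((w + w') / w)) = a - (a + b) * w / (w + w')"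
  proof -
    have "0 < a * w + a * w'" using a assms by (intro add_pos_pos mult_pos_pos)
    then show ?thesis using a assms by (simp add: field_simps)
  qed
  ultimately show ?thesis by (simp add: algebra_simps)
qed

text \<open>Gibbs' inequality: the cross entropy dominates the entropy.\<close>
lemma pair_entropy_le_logistic_pair_risk:
  assumes "0 \<le> a" "0 \<le> b" "0 < t"
  shows "pair_entropy a b \<le> logistic_pair_risk a b t"
proof -
  have "a - (a + b) * t / (t + 1) \<le> a * ln ((t + 1) / t) - a * ln ((a + b) / a)"
    using gibbs_term[of a b t 1] assms by simp
  moreover have "b - (b + a) * 1 / (1 + t) \<le> b * ln ((1 + t) / 1) - b * ln ((b + a) / b)"
    using gibbs_term[of b a 1 t] assms by simp
  moreover have "(a + b) * t / (t + 1) + (b + a) * 1 / (1 + t) = (a + b) * (t + 1) / (t + 1)"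
    by (simp add: add_divide_distrib[symmetric] algebra_simps)
  moreover have "1 + 1 / t = (t + 1) / t" using assms by (simp add: field_simps)
  moreover have "(a + b) * (t + 1) / (t + 1) = a + b" using assms by simp
  ultimately show ?thesis
    unfolding logistic_pair_risk_def pair_entropy_def by (simp add: algebra_simps add.commute)
qed

lemma pair_entropy_le_pair_loss_logistic_loss:
  "0 \<le> a \<Longrightarrow> 0 \<le> b \<Longrightarrow> pair_entropy a b \<le> pair_loss (logistic_loss \<beta>) a b d"
  unfolding pair_loss_logistic_loss by (intro pair_entropy_le_logistic_pair_risk) auto

lemma logistic_pair_risk_one: "logistic_pair_risk a b 1 = (a + b) * ln 2"
  by (simp add: logistic_pair_risk_def algebra_simps)

text \<open>Scores in the wrong order (\<open>t \<le> 1\<close> although \<open>b \<le> a\<close>) do no better than ties.\<close>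
lemma logistic_pair_risk_one_le:
  assumes "0 \<le> b" "b \<le> a" "0 < t" "t \<le> 1"
  shows "logistic_pair_risk a b 1 \<le> logistic_pair_risk a b t"
proof -
  have pos: "0 < 1 + 1 / t" using assms by (simp add: add_pos_pos)
  have "ln 2 \<le> ln (1 + 1 / t)"
    using assms by (simp add: field_simps)
  moreover have "2 * ln 2 \<le> ln (1 + 1 / t) + ln (1 + t)"
  proof -
    have "(1 + 1 / t) * (1 + t) - 4 = (t - 1)\<^sup>2 / t"
      using assms by (simp add: field_simps power2_eq_square)
    then have "4 \<le> (1 + 1 / t) * (1 + t)"
      using assms by (smt (verit) divide_nonneg_pos zero_le_power2)
    then have "ln 4 \<le> ln ((1 + 1 / t) * (1 + t))" using assms pos by simp
    then show ?thesis using pos assms ln_mult[of 2 2] by (simp add: ln_mult)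
  qed
  ultimately have "b * (ln (1 + 1 / t) - ln 2) \<le> a * (ln (1 + 1 / t) - ln 2)"
    and "0 \<le> b * (ln (1 + 1 / t) + ln (1 + t) - 2 * ln 2)"
    using assms by (auto intro: mult_right_mono)
  then show ?thesis
    unfolding logistic_pair_risk_one logistic_pair_risk_def by (simp add: algebra_simps)
qed

text \<open>Moving \<open>t\<close> from \<open>1\<close> towards \<open>a / b\<close> gains an amount quadratic in \<open>a - b\<close>.\<close>
lemma logistic_pair_risk_gain:
  assumes "0 \<le> b" "b \<le> a" "a + b \<le> 1"
  defines "c \<equiv> a - b"
  shows "c\<^sup>2 / 8 \<le> logistic_pair_risk a b 1 - logistic_pair_risk a b ((1 + c / 4) / (1 - c / 4))"
proof -
  have c: "0 \<le> c" "c \<le> 1" using assms by auto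
  then have p: "0 < 1 + c / 4" "0 < 1 - c / 4" by auto
  have "1 + 1 / ((1 + c / 4) / (1 - c / 4)) = 2 / (1 + c / 4)"
    and "1 + (1 + c / 4) / (1 - c / 4) = 2 / (1 - c / 4)" using p by (simp_all add: field_simps)
  then have "logistic_pair_risk a b 1 - logistic_pair_risk a b ((1 + c / 4) / (1 - c / 4))
      = a * ln (1 + c / 4) + b * ln (1 + - (c / 4))"
    unfolding logistic_pair_risk_one logistic_pair_risk_def
    using p by (simp add: ln_div algebra_simps)
  moreover have "c / 4 - 2 * (c / 4)\<^sup>2 \<le> ln (1 + c / 4)"
    and "- (c / 4) - 2 * (- (c / 4))\<^sup>2 \<le> ln (1 + - (c / 4))"
    using abs_ln_one_plus_x_minus_x_bound[of "c / 4"]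
      abs_ln_one_plus_x_minus_x_bound[of "- (c / 4)"] c
    by (simp_all add: abs_le_iff)
  ultimately have "a * (c / 4 - 2 * (c / 4)\<^sup>2) + b * (- (c / 4) - 2 * (- (c / 4))\<^sup>2)
      \<le> logistic_pair_risk a b 1 - logistic_pair_risk a b ((1 + c / 4) / (1 - c / 4))"
    using assms by (smt (verit) mult_left_mono)
  moreover have "a * (c / 4 - 2 * (c / 4)\<^sup>2) + b * (- (c / 4) - 2 * (- (c / 4))\<^sup>2)
      = c\<^sup>2 / 4 - (a + b) * c\<^sup>2 / 8"
    unfolding c_def power2_eq_square by (simp add: field_simps)
  moreover have "(a + b) * c\<^sup>2 \<le> c\<^sup>2" using assms mult_right_mono[of "a + b" 1 "c\<^sup>2"] by simp
  ultimately show ?thesis by linarith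
qed

lemma logistic_regret_calibration:
  assumes "\<beta> > 0" "0 \<le> a" "0 \<le> b" "a + b \<le> 1"
  shows "(auc_regret a b d)\<^sup>2 \<le> 8 * (pair_loss (logistic_loss \<beta>) a b d - pair_entropy a b)"
proof (rule auc_regret_calibration_symmetric[OF _ pair_entropy_commute])
  fix a b d :: real
  assume ab: "0 \<le> b" "b \<le> a" "a + b \<le> 1"
  show "(auc_regret a b d)\<^sup>2 \<le> 8 * (pair_loss (logistic_loss \<beta>) a b d - pair_entropy a b)"
  proof (cases "d > 0")
    case True
    then show ?thesis
      using ab pair_entropy_le_pair_loss_logistic_loss[of a b \<beta> d] by (simp add: auc_regret_def)
  next
    case False
    define c where "c = a - b"
    have "0 \<le> c" "c \<le> 1" using ab unfolding c_def by linarith+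
    then have t_pos: "0 < (1 + c / 4) / (1 - c / 4)" by (intro divide_pos_pos) auto
    have "0 < exp (\<beta> * d)" "exp (\<beta> * d) \<le> 1"
      using False assms(1) by (auto simp: mult_le_0_iff)
    then have "logistic_pair_risk a b 1 \<le> pair_loss (logistic_loss \<beta>) a b d"
      unfolding pair_loss_logistic_loss using ab by (intro logistic_pair_risk_one_le) auto
    moreover have "pair_entropy a b \<le> logistic_pair_risk a b ((1 + c / 4) / (1 - c / 4))"
      using ab t_pos by (intro pair_entropy_le_logistic_pair_risk) auto
    moreover have "c\<^sup>2 / 8
        \<le> logistic_pair_risk a b 1 - logistic_pair_risk a b ((1 + c / 4) / (1 - c / 4))"
      unfolding c_def using ab by (rule logistic_pair_risk_gain)
    moreover have "(auc_regret a b d)\<^sup>2 \<le> c\<^sup>2"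
      using auc_regret_le_abs_diff[of a b d] auc_regret_nonneg[of a b d] ab
      unfolding c_def by (intro power_mono) auto
    ultimately show ?thesis by argo
  qed
qed (use assms in auto)

lemma one_le_mult_one_minus_square:
  fixes \<epsilon> :: real
  assumes "0 \<le> \<epsilon>" "\<epsilon> \<le> 1 / 4"
  shows "1 \<le> (1 + 4 * \<epsilon>) * (1 - \<epsilon>)\<^sup>2"
proof -
  have "(1 + 4 * \<epsilon>) * (1 - \<epsilon>)\<^sup>2 - 1 = \<epsilon> * (2 - 7 * \<epsilon> + 4 * \<epsilon>\<^sup>2)"
    by (simp add: algebra_simps power2_eq_square)
  moreover have "0 \<le> 2 - 7 * \<epsilon> + 4 * \<epsilon>\<^sup>2" using assms zero_le_power2[of \<epsilon>] by linarith
  then have "0 \<le> \<epsilon> * (2 - 7 * \<epsilon> + 4 * \<epsilon>\<^sup>2)" using assms by simp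
  ultimately show ?thesis by linarith
qed

lemma entropy_term_perturbation:
  fixes a S S' a' \<epsilon> :: real
  assumes "0 \<le> a" "a \<le> S" "0 < S'" "0 < a'" "(1 - \<epsilon>)\<^sup>2 * a \<le> a'" "0 \<le> \<epsilon>" "\<epsilon> \<le> 1 / 4"
  shows "a * ln (S' / a') - a * ln (S / a) \<le> a * (S' / S - 1) + a * (4 * \<epsilon>)"
proof (cases "a = 0")
  case False
  then have a: "0 < a" and S: "0 < S" using assms by simp_all
  have "a \<le> (1 + 4 * \<epsilon>) * ((1 - \<epsilon>)\<^sup>2 * a)"
    using mult_right_mono[OF one_le_mult_one_minus_square[OF assms(6,7)], of a] a
    by (simp add: mult.assoc)
  also have "\<dots> \<le> (1 + 4 * \<epsilon>) * a'"
    using assms by (intro mult_left_mono) auto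
  finally have "a / a' \<le> 1 + 4 * \<epsilon>" using assms by (simp add: pos_divide_le_eq)
  then have "a / a' - 1 \<le> 4 * \<epsilon>" by simp
  moreover have "ln (S' / a') - ln (S / a) = ln (S' / S) + ln (a / a')"
    using a S assms by (simp add: ln_div)
  moreover have "ln (S' / S) \<le> S' / S - 1" "ln (a / a') \<le> a / a' - 1"
    using a S assms by (simp_all add: ln_le_minus_one)
  ultimately have "ln (S' / a') - ln (S / a) \<le> (S' / S - 1) + 4 * \<epsilon>" by linarith
  then have "a * (ln (S' / a') - ln (S / a)) \<le> a * ((S' / S - 1) + 4 * \<epsilon>)"
    using a by (intro mult_left_mono) auto
  then show ?thesis by (simp add: algebra_simps)
qed simp

lemma logistic_pair_risk_perturbed_ratio:
  fixes a b a' b' \<epsilon> :: real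
  assumes ab: "0 \<le> a" "0 \<le> b" "a + b \<le> 1" and ab': "0 < a'" "0 < b'"
    and lower: "(1 - \<epsilon>)\<^sup>2 * a \<le> a'" "(1 - \<epsilon>)\<^sup>2 * b \<le> b'"
    and sum: "a' + b' \<le> a + b + \<epsilon>" and \<epsilon>: "0 \<le> \<epsilon>" "\<epsilon> \<le> 1 / 4"
  shows "logistic_pair_risk a b (a' / b') - pair_entropy a b \<le> 5 * \<epsilon>"
proof -
  have "logistic_pair_risk a b (a' / b') = a * ln ((a' + b') / a') + b * ln ((a' + b') / b')"
    unfolding logistic_pair_risk_def using ab' by (simp add: field_simps)
  moreover have "a * ln ((a' + b') / a') - a * ln ((a + b) / a)
      \<le> a * ((a' + b') / (a + b) - 1) + a * (4 * \<epsilon>)"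
    and "b * ln ((a' + b') / b') - b * ln ((a + b) / b)
      \<le> b * ((a' + b') / (a + b) - 1) + b * (4 * \<epsilon>)"
    by (rule entropy_term_perturbation; use assms in auto)+
  moreover have "(a + b) * ((a' + b') / (a + b) - 1) \<le> \<epsilon>"
  proof (cases "a + b = 0")
    case False
    then have "(a + b) * ((a' + b') / (a + b) - 1) = a' + b' - (a + b)"
      by (simp add: right_diff_distrib)
    then show ?thesis using sum by simp
  qed (use \<epsilon> in simp)
  moreover have "(a + b) * (4 * \<epsilon>) \<le> 4 * \<epsilon>"
    using ab \<epsilon> mult_right_mono[of "a + b" 1 "4 * \<epsilon>"] by simp
  ultimately show ?thesis
    unfolding pair_entropy_def
    using distrib_right[of a b "(a' + b') / (a + b) - 1"] distrib_right[of a b "4 * \<epsilon>"]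
    by linarith
qed

definition shrink :: "real \<Rightarrow> real \<Rightarrow> real" where
  "shrink \<epsilon> y = (1 - \<epsilon>) * y + \<epsilon> / 2"

text \<open>The logit of the probability \<open>y\<close>, shrunk into the open unit interval to keep it finite,
  scaled for the logistic loss with slope \<open>\<beta>\<close>.\<close>
definition logit_score :: "real \<Rightarrow> real \<Rightarrow> real \<Rightarrow> real" where
  "logit_score \<beta> \<epsilon> y = ln (shrink \<epsilon> y / (1 - shrink \<epsilon> y)) / \<beta>"

lemma shrink_bounds:
  assumes "0 \<le> y" "y \<le> 1" "0 < \<epsilon>" "\<epsilon> \<le> 1"
  shows "0 < shrink \<epsilon> y" "shrink \<epsilon> y < 1"
    "(1 - \<epsilon>) * y \<le> shrink \<epsilon> y" "(1 - \<epsilon>) * (1 - y) \<le> 1 - shrink \<epsilon> y"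
proof -
  have "0 \<le> (1 - \<epsilon>) * y" "(1 - \<epsilon>) * y \<le> 1 - \<epsilon>"
    using assms mult_left_mono[of y 1 "1 - \<epsilon>"] by simp_all
  then show "0 < shrink \<epsilon> y" "shrink \<epsilon> y < 1"
    "(1 - \<epsilon>) * y \<le> shrink \<epsilon> y" "(1 - \<epsilon>) * (1 - y) \<le> 1 - shrink \<epsilon> y"
    using assms by (simp_all add: shrink_def algebra_simps)
qed

lemma pair_weights_sum_le_one:
  fixes y y' :: real
  assumes "0 \<le> y" "y \<le> 1" "0 \<le> y'" "y' \<le> 1"
  shows "y * (1 - y') + y' * (1 - y) \<le> 1"
proof -
  have "y * (1 - y') + y' * (1 - y) = 1 - ((1 - y) * (1 - y') + y * y')"
    by (simp add: algebra_simps)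
  moreover have "0 \<le> (1 - y) * (1 - y')" "0 \<le> y * y'" using assms by simp_all
  ultimately show ?thesis by linarith
qed

lemma shrink_pair_weights_sum_le:
  assumes "0 \<le> y" "y \<le> 1" "0 \<le> y'" "y' \<le> 1" "0 \<le> \<epsilon>" "\<epsilon> \<le> 1"
  shows "shrink \<epsilon> y * (1 - shrink \<epsilon> y') + shrink \<epsilon> y' * (1 - shrink \<epsilon> y)
    \<le> y * (1 - y') + y' * (1 - y) + \<epsilon>"
proof -
  have "shrink \<epsilon> y * (1 - shrink \<epsilon> y') + shrink \<epsilon> y' * (1 - shrink \<epsilon> y)
      - (y * (1 - y') + y' * (1 - y)) = ((1 - 2 * y) * (1 - 2 * y')) * ((2 * \<epsilon> - \<epsilon>\<^sup>2) / 2)"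
    by (simp add: shrink_def field_simps power2_eq_square)
  also have "\<dots> \<le> 1 * ((2 * \<epsilon> - \<epsilon>\<^sup>2) / 2)"
  proof (intro mult_right_mono)
    have "\<bar>(1 - 2 * y) * (1 - 2 * y')\<bar> \<le> 1"
      unfolding abs_mult using assms by (intro mult_le_one) auto
    then show "(1 - 2 * y) * (1 - 2 * y') \<le> 1" by simp
    show "0 \<le> (2 * \<epsilon> - \<epsilon>\<^sup>2) / 2"
      using assms mult_left_mono[of \<epsilon> 1 \<epsilon>] by (simp add: power2_eq_square)
  qed
  also have "\<dots> \<le> \<epsilon>" using assms by (simp add: power2_eq_square)
  finally show ?thesis by simp
qed

lemma logistic_pair_loss_logit_score:
  assumes "\<beta> > 0" "y \<in> {0..1}" "y' \<in> {0..1}" "0 < \<epsilon>" "\<epsilon> \<le> 1 / 4"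
  shows "pair_loss (logistic_loss \<beta>) (y * (1 - y')) (y' * (1 - y))
           (logit_score \<beta> \<epsilon> y - logit_score \<beta> \<epsilon> y')
         - pair_entropy (y * (1 - y')) (y' * (1 - y)) \<le> 5 * \<epsilon>"
proof -
  define x x' where "x = shrink \<epsilon> y" and "x' = shrink \<epsilon> y'"
  have y: "0 \<le> y" "y \<le> 1" "0 \<le> y'" "y' \<le> 1" using assms by auto
  note x = shrink_bounds[OF y(1,2) assms(4), folded x_def]
    and x' = shrink_bounds[OF y(3,4) assms(4), folded x'_def]
  have "\<beta> * (logit_score \<beta> \<epsilon> y - logit_score \<beta> \<epsilon> y') = ln (x / (1 - x)) - ln (x' / (1 - x'))"
    using assms(1) by (simp add: logit_score_def x_def x'_def algebra_simps)
  then have "exp (\<beta> * (logit_score \<beta> \<epsilon> y - logit_score \<beta> \<epsilon> y'))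
      = exp (ln (x / (1 - x))) / exp (ln (x' / (1 - x')))"
    by (simp only: exp_diff)
  also have "\<dots> = (x * (1 - x')) / (x' * (1 - x))"
    using x x' assms by simp
  finally have ratio: "exp (\<beta> * (logit_score \<beta> \<epsilon> y - logit_score \<beta> \<epsilon> y'))
      = (x * (1 - x')) / (x' * (1 - x))" .
  have "((1 - \<epsilon>) * y) * ((1 - \<epsilon>) * (1 - y')) \<le> x * (1 - x')"
    and "((1 - \<epsilon>) * y') * ((1 - \<epsilon>) * (1 - y)) \<le> x' * (1 - x)"
    using x x' assms y by (intro mult_mono; simp)+
  then have "(1 - \<epsilon>)\<^sup>2 * (y * (1 - y')) \<le> x * (1 - x')"
    and "(1 - \<epsilon>)\<^sup>2 * (y' * (1 - y)) \<le> x' * (1 - x)"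
    by (simp_all add: power2_eq_square mult_ac)
  moreover have "x * (1 - x') + x' * (1 - x) \<le> y * (1 - y') + y' * (1 - y) + \<epsilon>"
    unfolding x_def x'_def using y assms by (intro shrink_pair_weights_sum_le) auto
  moreover have "y * (1 - y') + y' * (1 - y) \<le> 1"
    using y by (rule pair_weights_sum_le_one)
  ultimately show ?thesis
    unfolding pair_loss_logistic_loss ratio using x x' y assms
    by (intro logistic_pair_risk_perturbed_ratio) auto
qed

section \<open>Calibrated surrogate losses\<close>

text \<open>\<open>\<Phi> a b\<close> is the minimum of \<^term>\<open>pair_loss L a b\<close> over score differences.\<close>
locale auc_calibrated_surrogate =
  fixes L :: "real \<Rightarrow> real" and \<Phi> :: "real \<Rightarrow> real \<Rightarrow> real" and K C :: real
  assumes loss_measurable: "L \<in> borel_measurable borel"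
    and minimum_measurable: "case_prod \<Phi> \<in> borel_measurable (borel \<Otimes>\<^sub>M borel)"
    and minimum_bounded: "\<And>a b. 0 \<le> a \<Longrightarrow> 0 \<le> b \<Longrightarrow> a + b \<le> 1 \<Longrightarrow> \<bar>\<Phi> a b\<bar> \<le> C"
    and minimum_le: "\<And>a b d. 0 \<le> a \<Longrightarrow> 0 \<le> b \<Longrightarrow> a + b \<le> 1 \<Longrightarrow> \<Phi> a b \<le> pair_loss L a b d"
    and regret_le: "\<And>a b d. 0 \<le> a \<Longrightarrow> 0 \<le> b \<Longrightarrow> a + b \<le> 1 \<Longrightarrow>
      (auc_regret a b d)\<^sup>2 \<le> K * (pair_loss L a b d - \<Phi> a b)"
    and near_optimal_scores: "\<And>r. r > 0 \<Longrightarrow> \<exists>\<sigma> \<in> borel_measurable borel. \<forall>y \<in> {0..1}. \<forall>y' \<in> {0..1}.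
      pair_loss L (y * (1 - y')) (y' * (1 - y)) (\<sigma> y - \<sigma> y') - \<Phi> (y * (1 - y')) (y' * (1 - y)) \<le> r"
begin

lemma calibration_constant_pos: "K > 0"
proof -
  have "1 \<le> K * (pair_loss L 1 0 (- 1) - \<Phi> 1 0)"
    using regret_le[of 1 0 "- 1"] by (simp add: auc_regret_def)
  moreover have "0 \<le> pair_loss L 1 0 (- 1) - \<Phi> 1 0"
    using minimum_le[of 1 0 "- 1"] by simp
  ultimately show ?thesis
    by (smt (verit) mult_nonpos_nonneg)
qed

end

lemma sigmoid_loss_calibrated:
  assumes "\<beta> > 0"
  shows "auc_calibrated_surrogate (sigmoid_loss \<beta>) (\<lambda>a b. - max a b) 2 1"
proof
  show "sigmoid_loss \<beta> \<in> borel_measurable borel"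
    unfolding sigmoid_loss_def sigmoid_def by measurable
  show "(\<lambda>(a, b). - max a b :: real) \<in> borel_measurable (borel \<Otimes>\<^sub>M borel)"
    by measurable
  fix r :: real
  assume "r > 0"
  define k where "k = 1 / (\<beta> * r)"
  have "k > 0" "1 / (\<beta> * k) = r"
    using assms \<open>r > 0\<close> by (simp_all add: k_def)
  moreover have "y * (1 - y') - y' * (1 - y) = y - y'" for y y' :: real
    by (simp add: algebra_simps)
  ultimately have "pair_loss (sigmoid_loss \<beta>) (y * (1 - y')) (y' * (1 - y)) (k * y - k * y')
      - - max (y * (1 - y')) (y' * (1 - y)) \<le> r" for y y'
    using sigmoid_pair_loss_linear_score[OF assms \<open>k > 0\<close>, of "y * (1 - y')" "y' * (1 - y)"]
    by (simp add: right_diff_distrib)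
  then show "\<exists>\<sigma> \<in> borel_measurable borel. \<forall>y \<in> {0..1}. \<forall>y' \<in> {0..1}.
      pair_loss (sigmoid_loss \<beta>) (y * (1 - y')) (y' * (1 - y)) (\<sigma> y - \<sigma> y')
      - - max (y * (1 - y')) (y' * (1 - y)) \<le> r"
    by (intro bexI[of _ "\<lambda>y. k * y"]) auto
qed (use sigmoid_pair_loss_ge sigmoid_regret_calibration[OF assms] in auto)

lemma logistic_loss_calibrated:
  assumes "\<beta> > 0"
  shows "auc_calibrated_surrogate (logistic_loss \<beta>) pair_entropy 8 1"
proof
  show "logistic_loss \<beta> \<in> borel_measurable borel"
    unfolding logistic_loss_def sigmoid_def by measurable
  show "case_prod pair_entropy \<in> borel_measurable (borel \<Otimes>\<^sub>M borel)"
    unfolding pair_entropy_def case_prod_beta by measurable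
  show "\<bar>pair_entropy a b\<bar> \<le> 1" if "0 \<le> a" "0 \<le> b" "a + b \<le> 1" for a b
    using pair_entropy_bounds[OF that(1,2)] that(3) by (simp add: abs_le_iff)
  fix r :: real
  assume "r > 0"
  define \<epsilon> where "\<epsilon> = min (1 / 4) (r / 5)"
  have \<epsilon>: "0 < \<epsilon>" "\<epsilon> \<le> 1 / 4" "5 * \<epsilon> \<le> r"
    using \<open>r > 0\<close> by (auto simp: \<epsilon>_def)
  have "logit_score \<beta> \<epsilon> \<in> borel_measurable borel"
    unfolding logit_score_def shrink_def by measurable
  then show "\<exists>\<sigma> \<in> borel_measurable borel. \<forall>y \<in> {0..1}. \<forall>y' \<in> {0..1}.
      pair_loss (logistic_loss \<beta>) (y * (1 - y')) (y' * (1 - y)) (\<sigma> y - \<sigma> y')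
      - pair_entropy (y * (1 - y')) (y' * (1 - y)) \<le> r"
    using logistic_pair_loss_logit_score[OF assms _ _ \<epsilon>(1,2)] \<epsilon>(3)
    by (intro bexI[of _ "logit_score \<beta> \<epsilon>"]) force+
qed (use pair_entropy_le_pair_loss_logistic_loss logistic_regret_calibration[OF assms] in auto)

section \<open>Risks as integrals over pairs of items\<close>

text \<open>No integrability of \<open>f\<close> is needed: if it fails, both sides are \<open>\<infinity>\<close>.\<close>
lemma ext_integral_eq_integral_add_nn_integral:
  fixes f g :: "'b \<Rightarrow> real"
  assumes g: "integrable N g" and f: "f \<in> borel_measurable N" and le: "AE x in N. g x \<le> f x"
  shows "ext_integral N f = ereal (\<integral>x. g x \<partial>N) + enn2ereal (\<integral>\<^sup>+x. ennreal (f x - g x) \<partial>N)"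
proof -
  have finite_ereal: "enn2ereal X = ereal (enn2real X)" if "X \<noteq> \<infinity>" for X :: ennreal
    using that by (cases X) auto
  have "(\<integral>\<^sup>+x. ennreal (- f x) \<partial>N) \<le> (\<integral>\<^sup>+x. ennreal (- g x) \<partial>N)"
    using le by (intro nn_integral_mono_AE) (auto elim!: eventually_mono intro: ennreal_leI)
  moreover have "(\<integral>\<^sup>+x. ennreal (- g x) \<partial>N) \<noteq> \<infinity>"
    using g by (simp add: real_integrable_def)
  ultimately have neg_finite: "(\<integral>\<^sup>+x. ennreal (- f x) \<partial>N) \<noteq> \<infinity>"
    by (auto simp: top_unique)
  show ?thesis
  proof (cases "integrable N f")
    case True
    then have "ext_integral N f = ereal (\<integral>x. f x \<partial>N)"
      using neg_finite
      by (simp add: ext_integral_def real_lebesgue_integral_def finite_ereal real_integrable_def)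
    moreover have "(\<integral>\<^sup>+x. ennreal (f x - g x) \<partial>N) = ennreal (\<integral>x. f x - g x \<partial>N)"
      using True g le by (intro nn_integral_eq_integral) auto
    moreover have "0 \<le> (\<integral>x. f x - g x \<partial>N)"
      using le by (intro integral_nonneg_AE) auto
    ultimately show ?thesis using True g by simp
  next
    case False
    then have "(\<integral>\<^sup>+x. ennreal (f x) \<partial>N) = \<infinity>"
      using f neg_finite by (simp add: real_integrable_def)
    moreover have "(\<integral>\<^sup>+x. ennreal (f x - g x) \<partial>N) = \<infinity>"
    proof (rule ccontr)
      assume "(\<integral>\<^sup>+x. ennreal (f x - g x) \<partial>N) \<noteq> \<infinity>"
      then have "integrable N (\<lambda>x. f x - g x)"
        using f g le by (intro integrableI_nonneg) (auto simp: top.not_eq_extremum)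
      then have "integrable N (\<lambda>x. (f x - g x) + g x)"
        using g by (rule Bochner_Integration.integrable_add)
      then show False using False by simp
    qed
    ultimately show ?thesis
      using neg_finite by (simp add: ext_integral_def finite_ereal)
  qed
qed

lemma abs_mult_le_of_unit: "0 \<le> (a::real) \<Longrightarrow> a \<le> 1 \<Longrightarrow> \<bar>b\<bar> \<le> c \<Longrightarrow> \<bar>a * b\<bar> \<le> c"
  unfolding abs_mult using mult_mono[of a 1 "\<bar>b\<bar>" c] by auto

definition label_indicator :: "bool \<Rightarrow> 'a \<times> bool \<Rightarrow> real" where
  "label_indicator u z = (if snd z = u then 1 else 0)"

definition label_prob :: "('a \<Rightarrow> real) \<Rightarrow> bool \<Rightarrow> 'a \<Rightarrow> real" where
  "label_prob \<eta> u y = (if u then \<eta> y else 1 - \<eta> y)"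

locale auc_setting =
  fixes M :: "'a measure" and D :: "('a \<times> bool) measure" and \<eta> :: "'a \<Rightarrow> real"
  assumes prob_space_D: "prob_space D" and sets_D: "sets D = sets (M \<Otimes>\<^sub>M count_space UNIV)"
    and cond_pos: "is_cond_pos M D \<eta>"
begin

definition \<mu> :: "'a measure" where "\<mu> = distr D M fst"

abbreviation P :: "('a \<times> 'a) measure" where "P \<equiv> \<mu> \<Otimes>\<^sub>M \<mu>"

definition label_part :: "bool \<Rightarrow> ('a \<times> bool) measure" where
  "label_part u = density D (\<lambda>z. ennreal (label_indicator u z))"

definition label_marginal :: "bool \<Rightarrow> 'a measure" where
  "label_marginal u = density \<mu> (\<lambda>y. ennreal (label_prob \<eta> u y))"

lemma eta_measurable[measurable]: "\<eta> \<in> borel_measurable M"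
  using cond_pos by (simp add: is_cond_pos_def)

lemma eta_bounds: "y \<in> space M \<Longrightarrow> 0 \<le> \<eta> y \<and> \<eta> y \<le> 1"
  using cond_pos by (simp add: is_cond_pos_def)

lemma measure_positive: "A \<in> sets M \<Longrightarrow> measure D (A \<times> {True}) = (\<integral>y. indicator A y * \<eta> y \<partial>\<mu>)"
  using cond_pos by (simp add: is_cond_pos_def \<mu>_def)

lemma space_D: "space D = space M \<times> UNIV"
  using sets_eq_imp_space_eq[OF sets_D] by (simp add: space_pair_measure)

lemma measurable_D: "measurable D N = measurable (M \<Otimes>\<^sub>M count_space UNIV) N"
  by (rule measurable_cong_sets[OF sets_D refl])

lemma measurable_DD:
  "measurable (D \<Otimes>\<^sub>M D) N = measurable ((M \<Otimes>\<^sub>M count_space UNIV) \<Otimes>\<^sub>M (M \<Otimes>\<^sub>M count_space UNIV)) N"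
  by (intro measurable_cong_sets sets_pair_measure_cong sets_D refl)

lemma fst_measurable[measurable]: "fst \<in> measurable D M"
  unfolding measurable_D by simp

lemma prob_space_mu: "prob_space \<mu>"
  unfolding \<mu>_def by (rule prob_space.prob_space_distr[OF prob_space_D fst_measurable])

lemma sets_mu[simp]: "sets \<mu> = sets M" and space_mu[simp]: "space \<mu> = space M"
  by (simp_all add: \<mu>_def)

lemma measurable_mu: "measurable \<mu> N = measurable M N"
  by (rule measurable_cong_sets) auto

lemma measurable_P: "measurable P N = measurable (M \<Otimes>\<^sub>M M) N"
  by (intro measurable_cong_sets sets_pair_measure_cong) auto

lemma space_P: "space P = space M \<times> space M"
  by (simp add: space_pair_measure)

lemma prob_space_P: "prob_space P"
  using prob_space_mu by (intro prob_space_pair)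

lemma integrable_P_bounded:
  fixes f :: "'a \<times> 'a \<Rightarrow> real"
  assumes "f \<in> borel_measurable (M \<Otimes>\<^sub>M M)" "\<And>q. q \<in> space P \<Longrightarrow> \<bar>f q\<bar> \<le> C"
  shows "integrable P f"
proof -
  interpret P: prob_space P by (rule prob_space_P)
  show ?thesis
    using assms unfolding measurable_P[symmetric]
    by (intro P.integrable_const_bound[where B = C]) (auto intro!: AE_I2)
qed

lemma integrable_DD_bounded:
  fixes f :: "('a \<times> bool) \<times> ('a \<times> bool) \<Rightarrow> real"
  assumes "f \<in> borel_measurable (D \<Otimes>\<^sub>M D)" "\<And>p. \<bar>f p\<bar> \<le> C"
  shows "integrable (D \<Otimes>\<^sub>M D) f"
proof -
  interpret DD: prob_space "D \<Otimes>\<^sub>M D" using prob_space_D by (intro prob_space_pair)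
  show ?thesis using assms by (intro DD.integrable_const_bound[where B = C]) (auto intro!: AE_I2)
qed

lemma label_prob_bounds: "y \<in> space M \<Longrightarrow> 0 \<le> label_prob \<eta> u y \<and> label_prob \<eta> u y \<le> 1"
  using eta_bounds[of y] by (auto simp: label_prob_def)

lemma label_prob_measurable[measurable]: "label_prob \<eta> u \<in> borel_measurable M"
  unfolding label_prob_def by (cases u) auto

lemma label_indicator_nonneg: "0 \<le> label_indicator u z"
  by (simp add: label_indicator_def)

lemma label_indicator_measurable[measurable]:
  "label_indicator u \<in> borel_measurable (M \<Otimes>\<^sub>M count_space UNIV)"
  unfolding label_indicator_def by measurable

lemma label_indicator_measurable_D[measurable]: "label_indicator u \<in> borel_measurable D"
  unfolding measurable_D by measurable

lemma times_in_sets_D: "A \<in> sets M \<Longrightarrow> A \<times> B \<in> sets D"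
  unfolding sets_D by (intro pair_measureI) auto

lemma measure_label:
  assumes A[measurable]: "A \<in> sets M"
  shows "measure D (A \<times> {u}) = (\<integral>y. indicator A y * label_prob \<eta> u y \<partial>\<mu>)"
proof (cases u)
  case False
  interpret D: prob_space D by (rule prob_space_D)
  interpret \<mu>: prob_space \<mu> by (rule prob_space_mu)
  have "A \<times> UNIV - A \<times> {True} = A \<times> {False}" by auto
  then have "measure D (A \<times> {False}) = measure D (A \<times> UNIV) - measure D (A \<times> {True})"
    using measure_Diff[of D "A \<times> UNIV" "A \<times> {True}"] times_in_sets_D[OF A] D.emeasure_finite
    by auto
  moreover have "measure D (A \<times> UNIV) = (\<integral>y. indicator A y \<partial>\<mu>)"
  proof -
    have "fst -` A \<inter> space D = A \<times> UNIV" using sets.sets_into_space[OF A] space_D by auto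
    then show ?thesis using A by (simp add: \<mu>_def measure_distr)
  qed
  moreover have "integrable \<mu> (\<lambda>y. indicator A y :: real)"
    by (intro \<mu>.integrable_const_bound[where B = 1]) (auto simp: measurable_mu)
  moreover have "integrable \<mu> (\<lambda>y. indicator A y * \<eta> y)"
    by (intro \<mu>.integrable_const_bound[where B = 1])
       (auto simp: measurable_mu eta_bounds indicator_def)
  ultimately show ?thesis
    using False measure_positive[OF A] by (simp add: label_prob_def algebra_simps)
qed (simp add: label_prob_def measure_positive[OF assms])

lemma sets_label_part[simp]: "sets (label_part u) = sets D"
  by (simp add: label_part_def)

lemma measurable_label_part: "measurable (label_part u) N = measurable (M \<Otimes>\<^sub>M count_space UNIV) N"
  using measurable_D by (simp add: measurable_cong_sets[OF sets_label_part refl])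

lemma sigma_finite_label_part: "sigma_finite_measure (label_part u)"
  using sigma_finite_measure.sigma_finite_iff_density_finite[
      OF prob_space_imp_sigma_finite[OF prob_space_D], of "\<lambda>z. ennreal (label_indicator u z)"]
  by (simp add: label_part_def)

lemma sigma_finite_label_marginal: "sigma_finite_measure (label_marginal u)"
  using sigma_finite_measure.sigma_finite_iff_density_finite[
      OF prob_space_imp_sigma_finite[OF prob_space_mu], of "\<lambda>y. ennreal (label_prob \<eta> u y)"]
  by (simp add: label_marginal_def measurable_mu)

lemma distr_label_part: "distr (label_part u) M fst = label_marginal u"
proof (rule measure_eqI)
  interpret D: prob_space D by (rule prob_space_D)
  interpret \<mu>: prob_space \<mu> by (rule prob_space_mu)
  fix A assume "A \<in> sets (distr (label_part u) M fst)"
  then have A[measurable]: "A \<in> sets M" by simp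
  have "fst -` A \<inter> space (label_part u) = A \<times> UNIV"
    using sets.sets_into_space[OF A] space_D by (auto simp: label_part_def)
  then have "emeasure (distr (label_part u) M fst) A = emeasure (label_part u) (A \<times> UNIV)"
    by (simp add: emeasure_distr measurable_label_part)
  also have "\<dots> = (\<integral>\<^sup>+z. ennreal (label_indicator u z) * indicator (A \<times> UNIV) z \<partial>D)"
    using times_in_sets_D[OF A] unfolding label_part_def by (intro emeasure_density) auto
  also have "\<dots> = (\<integral>\<^sup>+z. indicator (A \<times> {u}) z \<partial>D)"
    by (intro nn_integral_cong) (auto simp: label_indicator_def indicator_def)
  also have "\<dots> = emeasure D (A \<times> {u})"
    using times_in_sets_D[OF A] by simp
  also have "\<dots> = ennreal (\<integral>y. indicator A y * label_prob \<eta> u y \<partial>\<mu>)"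
    by (simp add: D.emeasure_eq_measure measure_label)
  also have "\<dots> = (\<integral>\<^sup>+y. ennreal (label_prob \<eta> u y) * indicator A y \<partial>\<mu>)"
    by (subst nn_integral_eq_integral[symmetric])
       (auto intro!: \<mu>.integrable_const_bound[where B = 1] nn_integral_cong
         simp: measurable_mu label_prob_bounds indicator_def)
  also have "\<dots> = emeasure (label_marginal u) A"
    by (simp add: label_marginal_def emeasure_density measurable_mu)
  finally show "emeasure (distr (label_part u) M fst) A = emeasure (label_marginal u) A" .
qed (simp add: label_marginal_def)

lemma integral_labelled_pairs:
  fixes f :: "'a \<times> 'a \<Rightarrow> real"
  assumes f[measurable]: "f \<in> borel_measurable (M \<Otimes>\<^sub>M M)"
  shows "(\<integral>p. label_indicator u (fst p) * label_indicator v (snd p) * f (fst (fst p), fst (snd p))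
           \<partial>(D \<Otimes>\<^sub>M D))
       = (\<integral>q. label_prob \<eta> u (fst q) * label_prob \<eta> v (snd q) * f q \<partial>P)"
proof -
  let ?fsts = "\<lambda>(z, z'). (fst z, fst z') :: 'a \<times> 'a"
  let ?G = "\<lambda>q. label_prob \<eta> u (fst q) * label_prob \<eta> v (snd q)"
  have fst_part: "fst \<in> measurable (label_part w) M" for w
    by (simp add: measurable_label_part)
  have "measurable (label_part u \<Otimes>\<^sub>M label_part v) (M \<Otimes>\<^sub>M M)
      = measurable ((M \<Otimes>\<^sub>M count_space UNIV) \<Otimes>\<^sub>M (M \<Otimes>\<^sub>M count_space UNIV)) (M \<Otimes>\<^sub>M M)"
    by (intro measurable_cong_sets sets_pair_measure_cong) (auto simp: sets_D)
  then have fsts_measurable: "?fsts \<in> measurable (label_part u \<Otimes>\<^sub>M label_part v) (M \<Otimes>\<^sub>M M)"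
    by simp
  have "(\<integral>p. label_indicator u (fst p) * label_indicator v (snd p) * f (fst (fst p), fst (snd p))
         \<partial>(D \<Otimes>\<^sub>M D))
      = (\<integral>p. f (?fsts p) \<partial>density (D \<Otimes>\<^sub>M D)
           (\<lambda>p. ennreal (label_indicator u (fst p) * label_indicator v (snd p))))"
    by (subst integral_density) (auto simp: measurable_DD label_indicator_nonneg case_prod_beta)
  also have "density (D \<Otimes>\<^sub>M D) (\<lambda>p. ennreal (label_indicator u (fst p) * label_indicator v (snd p)))
      = label_part u \<Otimes>\<^sub>M label_part v"
    unfolding label_part_def
    by (subst pair_measure_density[OF _ _ prob_space_imp_sigma_finite[OF prob_space_D]
          sigma_finite_label_part[unfolded label_part_def]])
       (auto intro!: density_cong simp: measurable_DD ennreal_mult label_indicator_nonneg)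
  also have "(\<integral>p. f (?fsts p) \<partial>(label_part u \<Otimes>\<^sub>M label_part v))
      = (\<integral>q. f q \<partial>distr (label_part u \<Otimes>\<^sub>M label_part v) (M \<Otimes>\<^sub>M M) ?fsts)"
    by (rule integral_distr[OF fsts_measurable f, symmetric])
  also have "distr (label_part u \<Otimes>\<^sub>M label_part v) (M \<Otimes>\<^sub>M M) ?fsts
      = label_marginal u \<Otimes>\<^sub>M label_marginal v"
    by (subst pair_measure_distr[symmetric])
       (auto simp: fst_part distr_label_part sigma_finite_label_marginal)
  also have "\<dots> = density P (\<lambda>q. ennreal (?G q))"
    unfolding label_marginal_def
    by (subst pair_measure_density[OF _ _ prob_space_imp_sigma_finite[OF prob_space_mu]
          sigma_finite_label_marginal[unfolded label_marginal_def]])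
       (auto intro!: density_cong simp: measurable_mu measurable_P space_pair_measure
         label_prob_bounds ennreal_mult)
  also have "(\<integral>q. f q \<partial>density P (\<lambda>q. ennreal (?G q))) = (\<integral>q. ?G q * f q \<partial>P)"
    by (subst integral_density) (auto simp: measurable_P space_pair_measure label_prob_bounds)
  finally show ?thesis .
qed

definition pn_weight :: "'a \<times> 'a \<Rightarrow> real" where
  "pn_weight q = \<eta> (fst q) * (1 - \<eta> (snd q))"

definition np_weight :: "'a \<times> 'a \<Rightarrow> real" where
  "np_weight q = \<eta> (snd q) * (1 - \<eta> (fst q))"

definition score_diff :: "('a \<Rightarrow> real) \<Rightarrow> 'a \<times> 'a \<Rightarrow> real" where
  "score_diff s q = s (fst q) - s (snd q)"

definition auc_excess :: "('a \<Rightarrow> real) \<Rightarrow> real" where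
  "auc_excess s = (\<integral>q. auc_regret (pn_weight q) (np_weight q) (score_diff s q) \<partial>P)"

lemma pn_weight_measurable[measurable]: "pn_weight \<in> borel_measurable (M \<Otimes>\<^sub>M M)"
  unfolding pn_weight_def by measurable

lemma np_weight_measurable[measurable]: "np_weight \<in> borel_measurable (M \<Otimes>\<^sub>M M)"
  unfolding np_weight_def by measurable

lemma score_diff_measurable[measurable]:
  assumes [measurable]: "s \<in> borel_measurable M"
  shows "score_diff s \<in> borel_measurable (M \<Otimes>\<^sub>M M)"
  unfolding score_diff_def by measurable

lemma weight_bounds:
  assumes "q \<in> space P"
  shows "0 \<le> pn_weight q" "0 \<le> np_weight q" "pn_weight q + np_weight q \<le> 1"
    "pn_weight q \<le> 1" "np_weight q \<le> 1"
proof -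
  obtain y y' where q: "q = (y, y')" and "0 \<le> \<eta> y" "\<eta> y \<le> 1" "0 \<le> \<eta> y'" "\<eta> y' \<le> 1"
    using assms eta_bounds by (force simp: space_P)
  then have "0 \<le> pn_weight q" "0 \<le> np_weight q" "pn_weight q + np_weight q \<le> 1"
    by (simp_all add: pn_weight_def np_weight_def pair_weights_sum_le_one)
  then show "0 \<le> pn_weight q" "0 \<le> np_weight q" "pn_weight q + np_weight q \<le> 1"
    "pn_weight q \<le> 1" "np_weight q \<le> 1"
    by linarith+
qed

lemma integrable_auc_regret:
  assumes [measurable]: "s \<in> borel_measurable M"
  shows "integrable P (\<lambda>q. auc_regret (pn_weight q) (np_weight q) (score_diff s q))"
proof (rule integrable_P_bounded[of _ 1])
  show "(\<lambda>q. auc_regret (pn_weight q) (np_weight q) (score_diff s q)) \<in> borel_measurable (M \<Otimes>\<^sub>M M)"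
    unfolding auc_regret_def by measurable
  fix q assume "q \<in> space P"
  then show "\<bar>auc_regret (pn_weight q) (np_weight q) (score_diff s q)\<bar> \<le> 1"
    using auc_regret_le_abs_diff[of "pn_weight q" "np_weight q" "score_diff s q"]
      auc_regret_nonneg[of "pn_weight q" "np_weight q" "score_diff s q"] weight_bounds[of q]
    by auto
qed

lemma auc_excess_nonneg: "0 \<le> auc_excess s"
  unfolding auc_excess_def by (intro integral_nonneg_AE) (simp add: auc_regret_nonneg)

text \<open>The conditional AUC loss of an ordered pair of items, given that the first is positive and
  the second negative, or the reverse.\<close>
definition pn_auc_loss :: "('a \<Rightarrow> real) \<Rightarrow> 'a \<times> 'a \<Rightarrow> real" where
  "pn_auc_loss s q =
     (if score_diff s q < 0 then 1 else 0) + (if score_diff s q = 0 then 1 / 2 else 0)"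

definition np_auc_loss :: "('a \<Rightarrow> real) \<Rightarrow> 'a \<times> 'a \<Rightarrow> real" where
  "np_auc_loss s q =
     (if score_diff s q > 0 then 1 else 0) + (if score_diff s q = 0 then 1 / 2 else 0)"

lemma auc_loss_measurable[measurable]:
  assumes [measurable]: "s \<in> borel_measurable M"
  shows "pn_auc_loss s \<in> borel_measurable (M \<Otimes>\<^sub>M M)"
    and "np_auc_loss s \<in> borel_measurable (M \<Otimes>\<^sub>M M)"
  unfolding pn_auc_loss_def np_auc_loss_def by measurable

lemma auc_loss_bounds: "\<bar>pn_auc_loss s q\<bar> \<le> 2" "\<bar>np_auc_loss s q\<bar> \<le> 2"
  unfolding pn_auc_loss_def np_auc_loss_def by auto

lemma auc_loss_split:
  "pn_weight q * pn_auc_loss s q + np_weight q * np_auc_loss s q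
     = min (pn_weight q) (np_weight q) + auc_regret (pn_weight q) (np_weight q) (score_diff s q)"
  unfolding pn_auc_loss_def np_auc_loss_def auc_regret_def by (auto simp: min_def field_simps)

lemma label_prob_weights:
  "label_prob \<eta> True (fst q) * label_prob \<eta> False (snd q) = pn_weight q"
  "label_prob \<eta> False (fst q) * label_prob \<eta> True (snd q) = np_weight q"
  by (simp_all add: label_prob_def pn_weight_def np_weight_def mult.commute)

lemma integral_labelled_auc_loss:
  assumes [measurable]: "s \<in> borel_measurable M"
  shows "(\<integral>p. auc_loss s (fst p) (snd p) * indicator {p. snd (fst p) \<noteq> snd (snd p)} p
           \<partial>(D \<Otimes>\<^sub>M D))
       = (\<integral>q. pn_weight q * pn_auc_loss s q + np_weight q * np_auc_loss s q \<partial>P)"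
proof -
  let ?pn = "\<lambda>p. label_indicator True (fst p) * label_indicator False (snd p)
      * pn_auc_loss s (fst (fst p), fst (snd p))"
  let ?np = "\<lambda>p. label_indicator False (fst p) * label_indicator True (snd p)
      * np_auc_loss s (fst (fst p), fst (snd p))"
  have "auc_loss s (fst p) (snd p) * indicator {p. snd (fst p) \<noteq> snd (snd p)} p = ?pn p + ?np p"
    for p
    by (cases "snd (fst p)"; cases "snd (snd p)")
       (auto simp: auc_loss_def lab_def label_indicator_def pn_auc_loss_def np_auc_loss_def
         score_diff_def indicator_def)
  moreover have "integrable (D \<Otimes>\<^sub>M D) ?pn" "integrable (D \<Otimes>\<^sub>M D) ?np"
    by (auto intro!: integrable_DD_bounded[of _ 2]
        simp: measurable_DD label_indicator_def pn_auc_loss_def np_auc_loss_def)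
  moreover have "integrable P (\<lambda>q. pn_weight q * pn_auc_loss s q)"
    "integrable P (\<lambda>q. np_weight q * np_auc_loss s q)"
    by (auto intro!: integrable_P_bounded[of _ 2] abs_mult_le_of_unit
        dest: weight_bounds simp: auc_loss_bounds)
  ultimately show ?thesis
    using integral_labelled_pairs[of "pn_auc_loss s" True False]
      integral_labelled_pairs[of "np_auc_loss s" False True]
    by (simp add: label_prob_weights)
qed

lemma measure_distinct_labels:
  "measure (D \<Otimes>\<^sub>M D) {p \<in> space (D \<Otimes>\<^sub>M D). snd (fst p) \<noteq> snd (snd p)}
     = (\<integral>q. pn_weight q + np_weight q \<partial>P)"
proof -
  let ?pn = "\<lambda>p. label_indicator True (fst p) * label_indicator False (snd p)"
  let ?np = "\<lambda>p. label_indicator False (fst p) * label_indicator True (snd p)"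
  let ?S = "{p \<in> space (D \<Otimes>\<^sub>M D). snd (fst p) \<noteq> snd (snd p)}"
  have "measure (D \<Otimes>\<^sub>M D) ?S = (\<integral>p. indicator ?S p \<partial>(D \<Otimes>\<^sub>M D))"
    by (simp add: Int_absorb2)
  also have "\<dots> = (\<integral>p. ?pn p + ?np p \<partial>(D \<Otimes>\<^sub>M D))"
    by (intro Bochner_Integration.integral_cong refl)
       (auto simp: label_indicator_def indicator_def split: if_splits)
  also have "\<dots> = (\<integral>q. pn_weight q \<partial>P) + (\<integral>q. np_weight q \<partial>P)"
    using integral_labelled_pairs[of "\<lambda>_. 1" True False]
      integral_labelled_pairs[of "\<lambda>_. 1" False True]
    by (subst Bochner_Integration.integral_add)
       (auto intro!: integrable_DD_bounded[of _ 1] simp: measurable_DD label_indicator_def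
         label_prob_weights)
  also have "\<dots> = (\<integral>q. pn_weight q + np_weight q \<partial>P)"
    by (subst Bochner_Integration.integral_add)
       (auto intro!: integrable_P_bounded[of _ 1] simp: weight_bounds)
  finally show ?thesis .
qed

lemma auc_risk_eq:
  assumes [measurable]: "s \<in> borel_measurable M"
  shows "auc_risk D s = ((\<integral>q. min (pn_weight q) (np_weight q) \<partial>P) + auc_excess s)
    / (\<integral>q. pn_weight q + np_weight q \<partial>P)"
proof -
  have "integrable P (\<lambda>q. min (pn_weight q) (np_weight q))"
    by (rule integrable_P_bounded[of _ 1]) (auto simp: weight_bounds min_def)
  then show ?thesis
    unfolding auc_risk_def integral_labelled_auc_loss[OF assms] measure_distinct_labels
      auc_loss_split auc_excess_def
    using integrable_auc_regret[OF assms] by simp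
qed

lemma surr_risk_eq_ext_integral:
  "surr_risk L M D \<eta> s
     = ext_integral P (\<lambda>q. pair_loss L (pn_weight q) (np_weight q) (score_diff s q))"
proof -
  have "(\<lambda>(y, y'). \<eta> y * (1 - \<eta> y') * L (s y - s y') + \<eta> y' * (1 - \<eta> y) * L (s y' - s y))
      = (\<lambda>q. pair_loss L (pn_weight q) (np_weight q) (score_diff s q))"
    by (auto simp: pair_loss_def pn_weight_def np_weight_def score_diff_def)
  then show ?thesis unfolding surr_risk_def \<mu>_def[symmetric] by simp
qed

end

section \<open>Consistency\<close>

text \<open>\<open>Z = 0\<close> is allowed; then \<open>R\<close> vanishes on \<open>S\<close> since \<open>x / 0 = 0\<close>.\<close>
lemma tendsto_INF_of_excess_tendsto_zero:
  fixes R E :: "'b \<Rightarrow> real" and s :: "nat \<Rightarrow> 'b"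
  assumes "S \<noteq> {}" and risk: "\<And>t. t \<in> S \<Longrightarrow> R t = (m + E t) / Z"
    and E_nonneg: "\<And>t. t \<in> S \<Longrightarrow> 0 \<le> E t" and "0 \<le> Z"
    and s: "\<And>i. s i \<in> S" and E_lim: "(\<lambda>i. E (s i)) \<longlonglongrightarrow> 0"
  shows "(\<lambda>i. R (s i)) \<longlonglongrightarrow> (INF t \<in> S. R t)"
proof -
  have lower: "m / Z \<le> R t" if "t \<in> S" for t
    using E_nonneg[OF that] risk[OF that] \<open>0 \<le> Z\<close> by (simp add: divide_right_mono)
  have "(\<lambda>i. m + E (s i)) \<longlonglongrightarrow> m + 0"
    by (rule tendsto_add[OF tendsto_const E_lim])
  then have "(\<lambda>i. (m + E (s i)) / Z) \<longlonglongrightarrow> (m + 0) / Z"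
    by (cases "Z = 0") (simp_all add: tendsto_divide)
  then have lim: "(\<lambda>i. R (s i)) \<longlonglongrightarrow> m / Z" using risk[OF s] by simp
  have "m / Z \<le> (INF t \<in> S. R t)"
    using \<open>S \<noteq> {}\<close> lower by (rule cINF_greatest)
  moreover have "(INF t \<in> S. R t) \<le> m / Z"
  proof (rule LIMSEQ_le_const[OF lim])
    have "bdd_below (R ` S)" using lower by (intro bdd_belowI2)
    then show "\<exists>N. \<forall>n\<ge>N. (INF t \<in> S. R t) \<le> R (s n)"
      using s by (auto intro: cINF_lower)
  qed
  ultimately have "m / Z = (INF t \<in> S. R t)" by (rule antisym)
  with lim show ?thesis by simp
qed

lemma INF_eq_of_nn_excess_small:
  fixes R :: "'b \<Rightarrow> ereal" and N :: "'b \<Rightarrow> ennreal"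
  assumes risk: "\<And>t. t \<in> S \<Longrightarrow> R t = ereal c + enn2ereal (N t)"
    and small: "\<And>r. r > 0 \<Longrightarrow> \<exists>t \<in> S. N t \<le> ennreal r"
  shows "(INF t \<in> S. R t) = ereal c"
proof (rule antisym)
  show "(INF t \<in> S. R t) \<le> ereal c"
  proof (rule ereal_le_epsilon2)
    fix e :: real
    assume "0 < e"
    then obtain t where "t \<in> S" "N t \<le> ennreal e" using small by blast
    then have "enn2ereal (N t) \<le> ereal e"
      using \<open>0 < e\<close> by (simp add: less_eq_ennreal.rep_eq)
    then have "R t \<le> ereal c + ereal e"
      using \<open>t \<in> S\<close> by (simp only: risk add_left_mono)
    with \<open>t \<in> S\<close> show "(INF t \<in> S. R t) \<le> ereal c + ereal e"
      by (blast intro: INF_lower2)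
  qed
  show "ereal c \<le> (INF t \<in> S. R t)"
    by (rule INF_greatest) (simp add: risk add_increasing2)
qed

lemma nn_excess_tendsto_zero:
  fixes R :: "nat \<Rightarrow> ereal" and N :: "nat \<Rightarrow> ennreal"
  assumes risk: "\<And>i. R i = ereal c + enn2ereal (N i)" and lim: "R \<longlonglongrightarrow> ereal c"
  shows "N \<longlonglongrightarrow> 0"
proof (rule order_tendstoI)
  fix a :: ennreal
  assume "0 < a"
  then obtain b where b: "0 < b" "b < a" by (blast dest: dense)
  then have "b < \<infinity>" using less_le_trans[OF b(2) top_greatest] by simp
  define r where "r = enn2real b"
  have r: "0 < r" "ennreal r < a"
    using b \<open>b < \<infinity>\<close> by (simp_all add: r_def enn2real_positive_iff)
  have "ereal c < ereal (c + r)" using r by simp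
  with lim have "\<forall>\<^sub>F i in sequentially. R i < ereal (c + r)"
    by (rule order_tendstoD)
  then show "\<forall>\<^sub>F i in sequentially. N i < a"
  proof (rule eventually_mono)
    fix i
    assume "R i < ereal (c + r)"
    then have "enn2ereal (N i) < ereal r"
      by (cases "enn2ereal (N i)") (auto simp: risk)
    then have "N i < ennreal r"
      using r by (simp add: less_ennreal.rep_eq)
    then show "N i < a" using r(2) by (rule less_trans)
  qed
qed simp

lemma ennreal_add_mult:
  "0 \<le> a \<Longrightarrow> 0 \<le> k \<Longrightarrow> 0 \<le> x \<Longrightarrow> ennreal (a + k * x) = ennreal a + ennreal k * ennreal x"
  by (simp add: ennreal_plus ennreal_mult)

locale calibrated_auc_setting = auc_setting M D \<eta> + auc_calibrated_surrogate L \<Phi> K C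
  for M :: "'a measure" and D \<eta> L \<Phi> K C
begin

definition surrogate_excess :: "('a \<Rightarrow> real) \<Rightarrow> ennreal" where
  "surrogate_excess t = (\<integral>\<^sup>+q. ennreal (pair_loss L (pn_weight q) (np_weight q) (score_diff t q)
       - \<Phi> (pn_weight q) (np_weight q)) \<partial>P)"

lemma minimum_weights_measurable[measurable]:
  "(\<lambda>q. \<Phi> (pn_weight q) (np_weight q)) \<in> borel_measurable (M \<Otimes>\<^sub>M M)"
  using measurable_compose[OF _ minimum_measurable, of "\<lambda>q. (pn_weight q, np_weight q)"] by simp

lemma pair_loss_weights_measurable[measurable]:
  assumes [measurable]: "t \<in> borel_measurable M"
  shows "(\<lambda>q. pair_loss L (pn_weight q) (np_weight q) (score_diff t q))
    \<in> borel_measurable (M \<Otimes>\<^sub>M M)"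
  using measurable_compose[OF _ loss_measurable] unfolding pair_loss_def by measurable

lemma surr_risk_decomposition:
  assumes [measurable]: "t \<in> borel_measurable M"
  shows "surr_risk L M D \<eta> t
    = ereal (\<integral>q. \<Phi> (pn_weight q) (np_weight q) \<partial>P) + enn2ereal (surrogate_excess t)"
  unfolding surr_risk_eq_ext_integral surrogate_excess_def
proof (rule ext_integral_eq_integral_add_nn_integral)
  show "integrable P (\<lambda>q. \<Phi> (pn_weight q) (np_weight q))"
    by (rule integrable_P_bounded[of _ C]) (auto intro: minimum_bounded dest: weight_bounds)
  show "AE q in P.
      \<Phi> (pn_weight q) (np_weight q) \<le> pair_loss L (pn_weight q) (np_weight q) (score_diff t q)"
    by (intro AE_I2 minimum_le) (auto dest: weight_bounds)
qed (simp add: measurable_P)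

lemma surrogate_excess_small:
  assumes "r > 0"
  shows "\<exists>t \<in> borel_measurable M. surrogate_excess t \<le> ennreal r"
proof -
  interpret P: prob_space P by (rule prob_space_P)
  obtain \<sigma> where [measurable]: "\<sigma> \<in> borel_measurable borel" and \<sigma>: "\<forall>y \<in> {0..1}. \<forall>y' \<in> {0..1}.
      pair_loss L (y * (1 - y')) (y' * (1 - y)) (\<sigma> y - \<sigma> y') - \<Phi> (y * (1 - y')) (y' * (1 - y)) \<le> r"
    using near_optimal_scores[OF assms] by blast
  have "surrogate_excess (\<sigma> \<circ> \<eta>) \<le> (\<integral>\<^sup>+q. ennreal r \<partial>P)"
    unfolding surrogate_excess_def
  proof (intro nn_integral_mono ennreal_leI)
    fix q assume "q \<in> space P"
    then obtain y y' where "q = (y, y')" "\<eta> y \<in> {0..1}" "\<eta> y' \<in> {0..1}"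
      using eta_bounds by (force simp: space_P)
    then show "pair_loss L (pn_weight q) (np_weight q) (score_diff (\<sigma> \<circ> \<eta>) q)
        - \<Phi> (pn_weight q) (np_weight q) \<le> r"
      using \<sigma> by (simp add: pn_weight_def np_weight_def score_diff_def)
  qed
  then show ?thesis
    by (intro bexI[of _ "\<sigma> \<circ> \<eta>"]) (simp_all add: P.emeasure_space_1)
qed

lemma auc_excess_le:
  assumes [measurable]: "t \<in> borel_measurable M" and "\<delta> > 0"
  shows "ennreal (auc_excess t) \<le> ennreal \<delta> + ennreal (K / (4 * \<delta>)) * surrogate_excess t"
proof -
  interpret P: prob_space P by (rule prob_space_P)
  let ?w = "\<lambda>q. auc_regret (pn_weight q) (np_weight q) (score_diff t q)"
  let ?e = "\<lambda>q. pair_loss L (pn_weight q) (np_weight q) (score_diff t q)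
      - \<Phi> (pn_weight q) (np_weight q)"
  have "integrable P ?w" by (rule integrable_auc_regret) simp
  then have "ennreal (auc_excess t) = (\<integral>\<^sup>+q. ennreal (?w q) \<partial>P)"
    unfolding auc_excess_def
    by (intro nn_integral_eq_integral[symmetric]) (auto simp: auc_regret_nonneg)
  also have "\<dots> \<le> (\<integral>\<^sup>+q. ennreal \<delta> + ennreal (K / (4 * \<delta>)) * ennreal (?e q) \<partial>P)"
  proof (intro nn_integral_mono)
    fix q assume q: "q \<in> space P"
    have "0 \<le> ?e q" "0 \<le> K / (4 * \<delta>)"
      using minimum_le weight_bounds[OF q] calibration_constant_pos \<open>\<delta> > 0\<close> by auto
    have "ennreal (?w q) \<le> ennreal (\<delta> + K / (4 * \<delta>) * ?e q)"
      using regret_le weight_bounds[OF q] \<open>\<delta> > 0\<close> by (intro ennreal_leI le_of_power2_le_mult) auto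
    also have "\<dots> = ennreal \<delta> + ennreal (K / (4 * \<delta>)) * ennreal (?e q)"
      using \<open>0 \<le> ?e q\<close> \<open>0 \<le> K / (4 * \<delta>)\<close> \<open>\<delta> > 0\<close> by (intro ennreal_add_mult) auto
    finally show "ennreal (?w q) \<le> ennreal \<delta> + ennreal (K / (4 * \<delta>)) * ennreal (?e q)" .
  qed
  also have "\<dots> = ennreal \<delta> + ennreal (K / (4 * \<delta>)) * surrogate_excess t"
    unfolding surrogate_excess_def
    by (simp add: nn_integral_add nn_integral_cmult P.emeasure_space_1 measurable_P)
  finally show ?thesis .
qed

lemma auc_excess_tendsto_zero:
  assumes s: "\<And>i. s i \<in> borel_measurable M" and lim: "(\<lambda>i. surrogate_excess (s i)) \<longlonglongrightarrow> 0"
  shows "(\<lambda>i. auc_excess (s i)) \<longlonglongrightarrow> 0"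
proof (rule tendstoI)
  fix e :: real assume "0 < e"
  define \<delta> r k where "\<delta> = e / 4" and "r = e * e / (4 * K)" and "k = K / (4 * \<delta>)"
  have "\<delta> > 0" "r > 0" "k > 0" "\<delta> + k * r = e / 2"
    using \<open>0 < e\<close> calibration_constant_pos by (simp_all add: \<delta>_def r_def k_def field_simps)
  have "\<forall>\<^sub>F i in sequentially. surrogate_excess (s i) < ennreal r"
    using lim \<open>r > 0\<close> by (auto intro: order_tendstoD)
  then show "\<forall>\<^sub>F i in sequentially. dist (auc_excess (s i)) 0 < e"
  proof (rule eventually_mono)
    fix i assume "surrogate_excess (s i) < ennreal r"
    have "ennreal (auc_excess (s i)) \<le> ennreal \<delta> + ennreal k * surrogate_excess (s i)"
      unfolding k_def by (rule auc_excess_le[OF s \<open>\<delta> > 0\<close>])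
    also have "\<dots> \<le> ennreal \<delta> + ennreal k * ennreal r"
      using \<open>surrogate_excess (s i) < ennreal r\<close> by (intro add_left_mono mult_left_mono) auto
    also have "\<dots> = ennreal (e / 2)"
      using \<open>\<delta> > 0\<close> \<open>r > 0\<close> \<open>k > 0\<close> ennreal_add_mult[of \<delta> k r] \<open>\<delta> + k * r = e / 2\<close> by simp
    finally have "auc_excess (s i) \<le> e / 2" using \<open>0 < e\<close> by simp
    then show "dist (auc_excess (s i)) 0 < e" using \<open>0 < e\<close> auc_excess_nonneg[of "s i"] by simp
  qed
qed

lemma surr_bayes_eq: "surr_bayes L M D \<eta> = ereal (\<integral>q. \<Phi> (pn_weight q) (np_weight q) \<partial>P)"
  unfolding surr_bayes_def
proof (rule INF_eq_of_nn_excess_small[where S = "borel_measurable M" and R = "surr_risk L M D \<eta>"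
      and N = surrogate_excess])
  show "surr_risk L M D \<eta> t
      = ereal (\<integral>q. \<Phi> (pn_weight q) (np_weight q) \<partial>P) + enn2ereal (surrogate_excess t)"
    if "t \<in> borel_measurable M" for t
    using that by (rule surr_risk_decomposition)
  show "\<exists>t \<in> borel_measurable M. surrogate_excess t \<le> ennreal r" if "r > 0" for r
    using that by (rule surrogate_excess_small)
qed

lemma surrogate_excess_tendsto_zero:
  assumes s: "\<And>i. s i \<in> borel_measurable M"
    and lim: "(\<lambda>i. surr_risk L M D \<eta> (s i)) \<longlonglongrightarrow> surr_bayes L M D \<eta>"
  shows "(\<lambda>i. surrogate_excess (s i)) \<longlonglongrightarrow> 0"
  using surr_risk_decomposition[OF s] lim[unfolded surr_bayes_eq]
  by (rule nn_excess_tendsto_zero[where R = "\<lambda>i. surr_risk L M D \<eta> (s i)"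
        and N = "\<lambda>i. surrogate_excess (s i)"])

theorem auc_risk_tendsto_bayes:
  assumes s: "\<And>i. s i \<in> borel_measurable M"
    and lim: "(\<lambda>i. surr_risk L M D \<eta> (s i)) \<longlonglongrightarrow> surr_bayes L M D \<eta>"
  shows "(\<lambda>i. auc_risk D (s i)) \<longlonglongrightarrow> auc_bayes M D"
  unfolding auc_bayes_def
proof (rule tendsto_INF_of_excess_tendsto_zero[where R = "auc_risk D" and E = auc_excess and s = s])
  show "(borel_measurable M :: ('a \<Rightarrow> real) set) \<noteq> {}"
    using borel_measurable_const[of "0 :: real" M] by blast
  show "auc_risk D t = ((\<integral>q. min (pn_weight q) (np_weight q) \<partial>P) + auc_excess t)
      / (\<integral>q. pn_weight q + np_weight q \<partial>P)" if "t \<in> borel_measurable M" for t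
    using that by (rule auc_risk_eq)
  show "0 \<le> (\<integral>q. pn_weight q + np_weight q \<partial>P)"
    by (intro integral_nonneg_AE AE_I2) (simp add: weight_bounds)
  show "(\<lambda>i. auc_excess (s i)) \<longlonglongrightarrow> 0"
    using s surrogate_excess_tendsto_zero[OF s lim] by (rule auc_excess_tendsto_zero)
qed (use auc_excess_nonneg s in auto)

end

theorem (in auc_calibrated_surrogate) auc_consistent: "auc_consistent L M"
  unfolding auc_consistent_def
proof (intro allI impI)
  fix D \<eta> and s :: "nat \<Rightarrow> 'a \<Rightarrow> real"
  assume "prob_space D \<and> sets D = sets (M \<Otimes>\<^sub>M count_space UNIV) \<and> is_cond_pos M D \<eta>"
  then interpret calibrated_auc_setting M D \<eta> L \<Phi> K C
    by (intro calibrated_auc_setting.intro auc_setting.intro auc_calibrated_surrogate_axioms) auto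
  assume "\<forall>i. s i \<in> borel_measurable M" "(\<lambda>i. surr_risk L M D \<eta> (s i)) \<longlonglongrightarrow> surr_bayes L M D \<eta>"
  then show "(\<lambda>i. auc_risk D (s i)) \<longlonglongrightarrow> auc_bayes M D"
    by (intro auc_risk_tendsto_bayes) auto
qed

theorem mainTheorem1:
  fixes \<beta> :: real and M :: "'a measure"
  assumes "\<beta> > 0"
  shows "auc_consistent (\<lambda>x. - (1 / (1 + exp (- \<beta> * x)))) M \<and>
         auc_consistent (\<lambda>x. - ln (1 / (1 + exp (- \<beta> * x)))) M"
proof -
  have "(\<lambda>x. - (1 / (1 + exp (- \<beta> * x)))) = sigmoid_loss \<beta>"
    and "(\<lambda>x. - ln (1 / (1 + exp (- \<beta> * x)))) = logistic_loss \<beta>"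
    by (simp_all add: fun_eq_iff sigmoid_loss_def logistic_loss_def sigmoid_def)
  moreover have "auc_consistent (sigmoid_loss \<beta>) M"
    by (rule auc_calibrated_surrogate.auc_consistent[OF sigmoid_loss_calibrated[OF assms]])
  moreover have "auc_consistent (logistic_loss \<beta>) M"
    by (rule auc_calibrated_surrogate.auc_consistent[OF logistic_loss_calibrated[OF assms]])
  ultimately show ?thesis by simp
qed

end
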